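(* Let $r\in(0,1]$ be small enough that $\bigcup_{v\in V_r}\Theta^{\rm out}_r(v)\subset\Lambda_r$. Then on the event $\mathcal A_{r,1}$, for every $x\in\Theta^{\rm in}_r(0)\cap\mathcal O$, $$\#W_r(x)\ge r^{-d\{(d-1)/4-2\epsilon\}}.$$
   Context: Frog model setting: $d\ge2$, $r\in(0,1]$, $\omega$ i.i.d. Bernoulli($r$) on $\mathbb{Z}^d$, independent simple random walks $(S^x_k)_{k\ge0}$ with $S^x_0=x$, independent of $\omega$; $\mathcal O:=\{x:\omega(x)=1\}$. $\tau(x,y):=\inf\{k\ge0:S^x_k=y\}$ if $\omega(x)=1$, $:=\infty$ otherwise. For $A\subset\mathbb{Z}^d$, $T_A(x,y):=\inf\{\sum_{i=0}^{m-1}\tau(x_i,x_{i+1}): m\in\mathbb{N},\ x_0,\dots,x_{m-1}\in A,\ x_m\in\mathbb{Z}^d,\ x_0=x,\ x_m=y\}$. Fix $\epsilon:=1/(12d)$. $B_\infty(z,R):=\{y\in\mathbb{R}^d:\|y-z\|_\infty\le R\}$. For $v\in\mathbb{Z}^d$, with $c_r:=7\lceil r^{-(1/2+\epsilon)}\rceil$: $\Theta^{\rm in}_r(v):=B_\infty(c_rv,r^{-(1/2+\epsilon)})\cap\mathbb{Z}^d$, $\Theta_r(v):=B_\infty(c_rv,2r^{-(1/2+\epsilon)})\cap\mathbb{Z}^d$, $\Theta^{\rm out}_r(v):=(B_\infty(c_rv,3r^{-(1/2+\epsilon)})\cap\mathbb{Z}^d)\setminus\Theta_r(v)$. $u\overset{*}{\sim}v$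 means $\|u-v\|_\infty=1$. $\mathcal S_r(v)$ is the event that $\Theta^{\rm in}_r(v)\cap\mathcal O\neq\emptyset$ and for every $x\in\Theta^{\rm in}_r(v)\cap\mathcal O$: (i) for every $u\overset{*}{\sim}v$ there is $a\in\Theta^{\rm in}_r(u)\cap\mathcal O$ with $T_{\Theta_r(v)}(x,a)\le r^{-(1+3\epsilon)}$; (ii) there is $b\in\Theta^{\rm out}_r(v)\cap\mathcal O$ with $T_{\Theta_r(v)}(x,b)\le r^{-(1+3\epsilon)}$. $\Lambda_r:=B_\infty(0,r^{-(d+1)/4})\cap\mathbb{Z}^d$, $V_r:=B_\infty(0,r^{-(d-1)/4+2\epsilon})\cap\mathbb{Z}^d$, $\mathcal A_{r,1}:=\bigcap_{v\in V_r}\mathcal S_r(v)$. For $x\in\Theta^{\rm in}_r(0)$, $W_r(x):=\{w\in\bigcup_{v\in V_r}\Theta^{\rm out}_r(v): T_{\bigcup_{v\in V_r}\Theta_r(v)}(x,w)\le2r^{-(d+1)/2}\}\cap\mathcal O$. *)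

theory Defs
  imports "HOL-Analysis.Analysis" "HOL-Library.Extended_Nat"
begin

type_synonym 'd pt = "int ^ 'd"

definition frog_eps :: "'d::finite itself \<Rightarrow> real" where
  "frog_eps _ = 1 / (12 * real CARD('d))"

definition occ :: "('d::finite pt \<Rightarrow> bool) \<Rightarrow> 'd pt set" where
  "occ \<omega> = {x. \<omega> x}"

definition tau :: "('d::finite pt \<Rightarrow> bool) \<Rightarrow> ('d pt \<Rightarrow> nat \<Rightarrow> 'd pt) \<Rightarrow> 'd pt \<Rightarrow> 'd pt \<Rightarrow> enat" where
  "tau \<omega> S x y = (if \<omega> x \<and> (\<exists>k. S x k = y) then enat (LEAST k. S x k = y) else \<infinity>)"

definition passage :: "('d::finite pt \<Rightarrow> bool) \<Rightarrow> ('d pt \<Rightarrow> nat \<Rightarrow> 'd pt) \<Rightarrow> 'd pt set \<Rightarrow> 'd pt \<Rightarrow> 'd pt \<Rightarrow> enat" where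
  "passage \<omega> S A x y = Inf {(\<Sum>i<m. tau \<omega> S (p i) (p (Suc i))) | m p.
      m \<ge> 1 \<and> p 0 = x \<and> p m = y \<and> (\<forall>i<m. p i \<in> A)}"

definition enat_le_real :: "enat \<Rightarrow> real \<Rightarrow> bool" where
  "enat_le_real t c \<longleftrightarrow> (\<exists>n. t = enat n \<and> real n \<le> c)"

definition boxZ :: "real \<Rightarrow> 'd::finite pt \<Rightarrow> real \<Rightarrow> 'd pt set" where
  "boxZ c v R = {y. \<forall>i. \<bar>real_of_int (y $ i) - c * real_of_int (v $ i)\<bar> \<le> R}"

definition scale_r :: "'d::finite itself \<Rightarrow> real \<Rightarrow> real" where
  "scale_r t r = r powr (-(1/2 + frog_eps t))"

definition c_r :: "'d::finite itself \<Rightarrow> real \<Rightarrow> real" where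
  "c_r t r = 7 * real_of_int \<lceil>scale_r t r\<rceil>"

definition Theta_in :: "real \<Rightarrow> 'd::finite pt \<Rightarrow> 'd pt set" where
  "Theta_in r v = boxZ (c_r TYPE('d) r) v (scale_r TYPE('d) r)"

definition Theta :: "real \<Rightarrow> 'd::finite pt \<Rightarrow> 'd pt set" where
  "Theta r v = boxZ (c_r TYPE('d) r) v (2 * scale_r TYPE('d) r)"

definition Theta_out :: "real \<Rightarrow> 'd::finite pt \<Rightarrow> 'd pt set" where
  "Theta_out r v = boxZ (c_r TYPE('d) r) v (3 * scale_r TYPE('d) r) - Theta r v"

definition star_adj :: "'d::finite pt \<Rightarrow> 'd pt \<Rightarrow> bool" where
  "star_adj u v \<longleftrightarrow> (\<forall>i. \<bar>u $ i - v $ i\<bar> \<le> 1) \<and> (\<exists>i. \<bar>u $ i - v $ i\<bar> = 1)"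

definition good_box :: "('d::finite pt \<Rightarrow> bool) \<Rightarrow> ('d pt \<Rightarrow> nat \<Rightarrow> 'd pt) \<Rightarrow> real \<Rightarrow> 'd pt \<Rightarrow> bool" where
  "good_box \<omega> S r v \<longleftrightarrow>
     Theta_in r v \<inter> occ \<omega> \<noteq> {} \<and>
     (\<forall>x \<in> Theta_in r v \<inter> occ \<omega>.
        (\<forall>u. star_adj u v \<longrightarrow>
           (\<exists>a \<in> Theta_in r u \<inter> occ \<omega>.
              enat_le_real (passage \<omega> S (Theta r v) x a) (r powr (-(1 + 3 * frog_eps TYPE('d)))))) \<and>
        (\<exists>b \<in> Theta_out r v \<inter> occ \<omega>.
           enat_le_real (passage \<omega> S (Theta r v) x b) (r powr (-(1 + 3 * frog_eps TYPE('d))))))"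

definition Lambda_r :: "real \<Rightarrow> 'd::finite pt set" where
  "Lambda_r r = boxZ 0 0 (r powr (-(real CARD('d) + 1) / 4))"

definition V_r :: "real \<Rightarrow> 'd::finite pt set" where
  "V_r r = boxZ 0 0 (r powr (-(real CARD('d) - 1) / 4 + 2 * frog_eps TYPE('d)))"

definition A_r1 :: "('d::finite pt \<Rightarrow> bool) \<Rightarrow> ('d pt \<Rightarrow> nat \<Rightarrow> 'd pt) \<Rightarrow> real \<Rightarrow> bool" where
  "A_r1 \<omega> S r \<longleftrightarrow> (\<forall>v \<in> V_r r. good_box \<omega> S r v)"

definition W_r :: "('d::finite pt \<Rightarrow> bool) \<Rightarrow> ('d pt \<Rightarrow> nat \<Rightarrow> 'd pt) \<Rightarrow> real \<Rightarrow> 'd pt \<Rightarrow> 'd pt set" where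
  "W_r \<omega> S r x =
     {w \<in> (\<Union>v \<in> V_r r. Theta_out r v).
        enat_le_real (passage \<omega> S (\<Union>v \<in> V_r r. Theta r v) x w) (2 * r powr (-(real CARD('d) + 1) / 2))}
     \<inter> occ \<omega>"

text \<open>Sample paths of simple random walks: start at x, nearest-neighbour steps.\<close>
definition srw_paths :: "('d::finite pt \<Rightarrow> nat \<Rightarrow> 'd pt) \<Rightarrow> bool" where
  "srw_paths S \<longleftrightarrow> (\<forall>x. S x 0 = x) \<and>
     (\<forall>x k. (\<Sum>i\<in>UNIV. \<bar>S x (Suc k) $ i - S x k $ i\<bar>) = 1)"

end

theory Submission
  imports Defs
begin

text \<open>
  Every box index \<open>v \<in> V_r\<close> is joined to \<open>0\<close> by a chain of \<open>*\<close>-adjacent indices, obtained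
  by moving each coordinate one step towards \<open>0\<close>; the chain has as many steps as the sup-norm
  of \<open>v\<close>, at most \<open>R = r^{-(d-1)/4+2\<epsilon>}\<close>. On \<open>A_{r,1}\<close> every box of the chain is good, so the
  frogs started from \<open>x\<close> pass from \<open>\<Theta>\<^sup>i\<^sup>n\<close> of one box to \<open>\<Theta>\<^sup>i\<^sup>n\<close> of the next, and finally
  to \<open>\<Theta>\<^sup>o\<^sup>u\<^sup>t(v)\<close>, each time within \<open>r^{-(1+3\<epsilon>)}\<close> and inside the boxes \<open>\<Theta>\<close>. The passage
  time satisfies the triangle inequality, so the total is at most
  \<open>(R + 1) r^{-(1+3\<epsilon>)} \<le> 2 r^{-(d+1)/2}\<close>, and every \<open>\<Theta>\<^sup>o\<^sup>u\<^sup>t(v)\<close> meets \<open>W_r(x)\<close>.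
  These sets are pairwise disjoint, since the box spacing \<open>c_r\<close> exceeds six times the scale,
  whence \<open>#W_r(x) \<ge> #V_r \<ge> R^d\<close>.
\<close>

lemma enat_le_real_mono:
  assumes "s \<le> t" and "enat_le_real t c"
  shows "enat_le_real s c"
proof -
  obtain n where n: "t = enat n" "real n \<le> c"
    using assms(2) unfolding enat_le_real_def by blast
  with assms(1) obtain k where "s = enat k" "k \<le> n"
    by (metis enat_ile enat_ord_simps(1))
  with n show ?thesis
    unfolding enat_le_real_def by force
qed

lemma enat_le_real_add:
  assumes "enat_le_real s a" and "enat_le_real t b"
  shows "enat_le_real (s + t) (a + b)"
  using assms unfolding enat_le_real_def by force

lemma enat_le_real_weaken: "enat_le_real t a \<Longrightarrow> a \<le> b \<Longrightarrow> enat_le_real t b"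
  unfolding enat_le_real_def by auto

lemma passage_le_chain:
  assumes "1 \<le> m" "p 0 = x" "p m = y" "\<forall>i<m. p i \<in> A"
  shows "passage \<omega> S A x y \<le> (\<Sum>i<m. tau \<omega> S (p i) (p (Suc i)))"
  unfolding passage_def using assms by (intro Inf_lower) blast

lemma passage_attained:
  assumes "passage \<omega> S A x y \<noteq> \<infinity>"
  obtains m p where "1 \<le> m" "p 0 = x" "p m = y" "\<forall>i<m. p i \<in> A"
    "passage \<omega> S A x y = (\<Sum>i<m. tau \<omega> S (p i) (p (Suc i)))"
proof -
  let ?T = "{(\<Sum>i<m. tau \<omega> S (p i) (p (Suc i))) | m p.
      m \<ge> 1 \<and> p 0 = x \<and> p m = y \<and> (\<forall>i<m. p i \<in> A)}"
  have "?T \<noteq> {}"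
  proof
    assume "?T = {}"
    then have "passage \<omega> S A x y = \<infinity>"
      unfolding passage_def by (simp only: Inf_empty top_enat_def)
    with assms show False ..
  qed
  then obtain t where "t \<in> ?T"
    by blast
  then have "Inf ?T \<in> ?T"
    by (rule wellorder_InfI)
  then show ?thesis
    using that unfolding passage_def by blast
qed

lemma passage_antimono: "A \<subseteq> B \<Longrightarrow> passage \<omega> S B x y \<le> passage \<omega> S A x y"
  unfolding passage_def by (intro Inf_superset_mono) blast

lemma sum_lessThan_add_nat:
  "(\<Sum>i<a + b. f i) = (\<Sum>i<a. f i) + (\<Sum>j<b. f (a + j))" for f :: "nat \<Rightarrow> 'a::comm_monoid_add"
  by (induction b) (simp_all add: add.assoc)

lemma passage_triangle:
  "passage \<omega> S A x z \<le> passage \<omega> S A x y + passage \<omega> S A y z"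
proof (cases "passage \<omega> S A x y = \<infinity> \<or> passage \<omega> S A y z = \<infinity>")
  case True
  then show ?thesis by auto
next
  case False
  then obtain m1 p1 where
      p1: "1 \<le> m1" "p1 0 = x" "p1 m1 = y" "\<forall>i<m1. p1 i \<in> A"
        "passage \<omega> S A x y = (\<Sum>i<m1. tau \<omega> S (p1 i) (p1 (Suc i)))"
    using passage_attained by blast
  obtain m2 p2 where
      p2: "1 \<le> m2" "p2 0 = y" "p2 m2 = z" "\<forall>i<m2. p2 i \<in> A"
        "passage \<omega> S A y z = (\<Sum>i<m2. tau \<omega> S (p2 i) (p2 (Suc i)))"
    using False passage_attained by blast
  define p where "p i = (if i \<le> m1 then p1 i else p2 (i - m1))" for i
  have p_shift: "p (m1 + j) = p2 j" for j
    using p1(3) p2(2) by (cases j) (auto simp: p_def)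
  have "(\<Sum>i<m1. tau \<omega> S (p i) (p (Suc i))) = passage \<omega> S A x y"
    using p1(5) by (auto simp: p_def intro!: sum.cong)
  moreover have "(\<Sum>j<m2. tau \<omega> S (p (m1 + j)) (p (Suc (m1 + j)))) = passage \<omega> S A y z"
    using p2(5) p_shift[of "Suc _"] by (simp add: p_shift)
  moreover have "p i \<in> A" if "i < m1 + m2" for i
  proof (cases "i < m1")
    case True
    then show ?thesis using p1(4) by (simp add: p_def)
  next
    case False
    then show ?thesis
      using p2(4) p_shift[of "i - m1"] that by simp
  qed
  moreover have "p 0 = x" "p (m1 + m2) = z"
    using p1(2) p2(3) p_shift[of m2] by (simp_all add: p_def)
  ultimately show ?thesis
    using passage_le_chain[of "m1 + m2" p x z A \<omega> S] p1(1)
    by (simp add: sum_lessThan_add_nat)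
qed

lemma passage_self:
  assumes "srw_paths S" "\<omega> x" "x \<in> A"
  shows "passage \<omega> S A x x = 0"
proof -
  have "tau \<omega> S x x = 0"
    using assms(1,2) unfolding srw_paths_def tau_def by (auto simp: zero_enat_def)
  then show ?thesis
    using passage_le_chain[of 1 "\<lambda>_. x" x x A \<omega> S] assms(3) by simp
qed

lemma enat_le_real_passage_trans:
  assumes "enat_le_real (passage \<omega> S A x y) a" and "enat_le_real (passage \<omega> S B y z) b"
    and "B \<subseteq> A"
  shows "enat_le_real (passage \<omega> S A x z) (a + b)"
proof (rule enat_le_real_mono)
  have "passage \<omega> S A x z \<le> passage \<omega> S A x y + passage \<omega> S A y z"
    by (rule passage_triangle)
  also have "\<dots> \<le> passage \<omega> S A x y + passage \<omega> S B y z"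
    using passage_antimono[OF assms(3)] by (rule add_left_mono)
  finally show "passage \<omega> S A x z \<le> passage \<omega> S A x y + passage \<omega> S B y z" .
  show "enat_le_real (passage \<omega> S A x y + passage \<omega> S B y z) (a + b)"
    using assms(1,2) by (rule enat_le_real_add)
qed

lemma card_le_card_if_hits_disjoint:
  assumes "finite W" and hits: "\<And>v. v \<in> V \<Longrightarrow> W \<inter> F v \<noteq> {}"
    and disj: "disjoint_family_on F V"
  shows "card V \<le> card W"
proof -
  from hits have "\<forall>v \<in> V. \<exists>w. w \<in> W \<inter> F v"
    by blast
  then obtain f where f: "\<forall>v \<in> V. f v \<in> W \<inter> F v"
    by metis
  have "inj_on f V"
  proof (rule inj_onI)
    fix v w
    assume vw: "v \<in> V" "w \<in> V" "f v = f w"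
    then have "F v \<inter> F w \<noteq> {}"
      using f by (metis IntD2 disjoint_iff)
    with vw(1,2) show "v = w"
      using disj unfolding disjoint_family_on_def by blast
  qed
  moreover have "f ` V \<subseteq> W"
    using f by blast
  ultimately show ?thesis
    using assms(1) by (rule card_inj_on_le)
qed

lemma vec_with_components_eq_image:
  "{y :: 'a ^ 'n::finite. \<forall>i. y $ i \<in> B i} = vec_lambda ` Pi\<^sub>E UNIV B"
proof (intro equalityI subsetI)
  fix y :: "'a ^ 'n"
  assume "y \<in> {y. \<forall>i. y $ i \<in> B i}"
  then have "vec_nth y \<in> Pi\<^sub>E UNIV B"
    by auto
  then show "y \<in> vec_lambda ` Pi\<^sub>E UNIV B"
    by (metis image_eqI vec_lambda_eta)
qed auto

lemma card_vec_with_components: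
  "card {y :: 'a ^ 'n::finite. \<forall>i. y $ i \<in> B} = card B ^ CARD('n)"
proof -
  have "inj_on (vec_lambda :: ('n \<Rightarrow> 'a) \<Rightarrow> 'a ^ 'n) (Pi\<^sub>E UNIV (\<lambda>_. B))"
    by (auto simp: inj_on_def vec_lambda_inject)
  then show ?thesis
    unfolding vec_with_components_eq_image[of "\<lambda>_. B"] by (simp add: card_image card_PiE)
qed

lemma finite_boxZ: "finite (boxZ c v R)"
proof (rule finite_subset)
  show "boxZ c v R \<subseteq>
      {y. \<forall>i. y $ i \<in> {\<lfloor>c * real_of_int (v $ i) - R\<rfloor>..\<lceil>c * real_of_int (v $ i) + R\<rceil>}}"
  proof (intro subsetI CollectI allI)
    fix y i
    assume "y \<in> boxZ c v R"
    then have "\<bar>real_of_int (y $ i) - c * real_of_int (v $ i)\<bar> \<le> R"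
      unfolding boxZ_def by blast
    then show "y $ i \<in> {\<lfloor>c * real_of_int (v $ i) - R\<rfloor>..\<lceil>c * real_of_int (v $ i) + R\<rceil>}"
      by (simp add: abs_le_iff floor_le_iff le_ceiling_iff)
  qed
qed (unfold vec_with_components_eq_image, simp add: finite_PiE)

lemma boxZ_mono: "R \<le> R' \<Longrightarrow> boxZ c v R \<subseteq> boxZ c v R'"
  unfolding boxZ_def by (blast intro: order_trans)

lemma boxZ_disjoint:
  assumes "0 \<le> R" "2 * R < c" and "v \<noteq> w"
  shows "boxZ c v R \<inter> boxZ c w R = {}"
proof -
  obtain i where i: "v $ i \<noteq> w $ i"
    using assms(3) by (auto simp: vec_eq_iff)
  have "1 \<le> \<bar>real_of_int (v $ i) - real_of_int (w $ i)\<bar>"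
    using i by linarith
  then have "c \<le> c * \<bar>real_of_int (v $ i) - real_of_int (w $ i)\<bar>"
    using assms(1,2) by simp
  also have "\<dots> = \<bar>c * (real_of_int (v $ i) - real_of_int (w $ i))\<bar>"
    using assms(1,2) by (simp add: abs_mult)
  also have "\<dots> = \<bar>c * real_of_int (v $ i) - c * real_of_int (w $ i)\<bar>"
    by (simp only: right_diff_distrib)
  finally have far: "c \<le> \<bar>c * real_of_int (v $ i) - c * real_of_int (w $ i)\<bar>" .
  show ?thesis
  proof (rule ccontr)
    assume "boxZ c v R \<inter> boxZ c w R \<noteq> {}"
    then obtain y where "\<bar>real_of_int (y $ i) - c * real_of_int (v $ i)\<bar> \<le> R"
        "\<bar>real_of_int (y $ i) - c * real_of_int (w $ i)\<bar> \<le> R"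
      unfolding boxZ_def by blast
    with far assms(2) show False
      by linarith
  qed
qed

lemma boxZ_origin: "boxZ 0 0 R = {y. \<forall>i. y $ i \<in> {-\<lfloor>R\<rfloor>..\<lfloor>R\<rfloor>}}"
proof -
  have "\<bar>real_of_int z\<bar> \<le> R \<longleftrightarrow> z \<in> {-\<lfloor>R\<rfloor>..\<lfloor>R\<rfloor>}" for z
    by (metis of_int_abs le_floor_iff abs_le_iff atLeastAtMost_iff minus_le_iff)
  then show ?thesis
    unfolding boxZ_def by simp
qed

lemma card_boxZ_origin_ge:
  assumes "0 \<le> R"
  shows "R ^ CARD('d) \<le> real (card (boxZ 0 0 R :: 'd::finite pt set))"
proof -
  have "card {-\<lfloor>R\<rfloor>..\<lfloor>R\<rfloor>} = 2 * nat \<lfloor>R\<rfloor> + 1"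
    using assms by simp arith
  then have "card (boxZ 0 0 R :: 'd pt set) = (2 * nat \<lfloor>R\<rfloor> + 1) ^ CARD('d)"
    unfolding boxZ_origin card_vec_with_components by simp
  moreover have "R \<le> real (2 * nat \<lfloor>R\<rfloor> + 1)"
    using assms by linarith
  ultimately show ?thesis
    using assms by (simp add: power_mono)
qed

definition toward_origin :: "'d::finite pt \<Rightarrow> 'd pt" where
  "toward_origin v = (\<chi> i. v $ i - sgn (v $ i))"

lemma star_adj_toward_origin: "v \<noteq> 0 \<Longrightarrow> star_adj v (toward_origin v)"
  unfolding star_adj_def toward_origin_def by (simp add: vec_eq_iff abs_sgn_eq)

lemma abs_toward_origin_le: "\<bar>toward_origin v $ i\<bar> \<le> \<bar>v $ i\<bar>"
  unfolding toward_origin_def by (simp add: sgn_if)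

lemma abs_toward_origin_le_pred:
  "\<bar>v $ i\<bar> \<le> int N + 1 \<Longrightarrow> \<bar>toward_origin v $ i\<bar> \<le> int N"
  unfolding toward_origin_def by (auto simp: sgn_if)

lemma toward_origin_in_boxZ_origin:
  assumes "v \<in> boxZ 0 0 R"
  shows "toward_origin v \<in> boxZ 0 0 R"
proof -
  have "\<bar>real_of_int (toward_origin v $ i)\<bar> \<le> \<bar>real_of_int (v $ i)\<bar>" for i
    by (metis abs_toward_origin_le of_int_abs of_int_le_iff)
  moreover have "\<bar>real_of_int (v $ i)\<bar> \<le> R" for i
    using assms unfolding boxZ_def by simp
  ultimately have "\<bar>real_of_int (toward_origin v $ i)\<bar> \<le> R" for i
    by (meson order_trans)
  then show ?thesis
    unfolding boxZ_def by simp
qed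

lemma good_boxes_reach_Theta_in:
  fixes V :: "'d::finite pt set" and r :: real
  defines "U \<equiv> \<Union>u \<in> V. Theta r u"
  assumes S: "srw_paths S" and x: "x \<in> Theta_in r 0 \<inter> occ \<omega>"
    and good: "\<And>v. v \<in> V \<Longrightarrow> good_box \<omega> S r v"
    and closed: "\<And>v. v \<in> V \<Longrightarrow> toward_origin v \<in> V"
    and v: "v \<in> V" "\<forall>i. \<bar>v $ i\<bar> \<le> int N"
  shows "\<exists>a \<in> Theta_in r v \<inter> occ \<omega>.
    enat_le_real (passage \<omega> S U x a) (real N * r powr (-(1 + 3 * frog_eps TYPE('d))))"
proof -
  let ?C = "r powr (-(1 + 3 * frog_eps TYPE('d)))"
  have at_origin: "\<exists>a \<in> Theta_in r 0 \<inter> occ \<omega>. enat_le_real (passage \<omega> S U x a) (real n * ?C)"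
    if "0 \<in> V" for n
  proof -
    have "x \<in> Theta r 0"
      using x boxZ_mono[of "scale_r TYPE('d) r" "2 * scale_r TYPE('d) r"]
      unfolding Theta_in_def Theta_def scale_r_def by auto
    with that have "x \<in> U"
      unfolding U_def by blast
    then have "passage \<omega> S U x x = 0"
      using S x by (simp add: passage_self occ_def)
    then have "enat_le_real (passage \<omega> S U x x) (real n * ?C)"
      unfolding enat_le_real_def by (simp add: zero_enat_def)
    with x show ?thesis
      by blast
  qed
  show ?thesis
    using v
  proof (induction N arbitrary: v)
    case 0
    then have "v = 0"
      by (simp add: vec_eq_iff)
    with 0 at_origin show ?case
      by blast
  next
    case (Suc N)
    show ?case
    proof (cases "v = 0")
      case True
      with Suc.prems at_origin show ?thesis
        by blast
    next
      case False
      let ?u = "toward_origin v"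
      have u: "?u \<in> V" "\<forall>i. \<bar>?u $ i\<bar> \<le> int N"
        using Suc.prems closed abs_toward_origin_le_pred[of v _ N] by (simp_all add: add.commute)
      then obtain a where a: "a \<in> Theta_in r ?u \<inter> occ \<omega>"
          "enat_le_real (passage \<omega> S U x a) (real N * ?C)"
        using Suc.IH by blast
      then obtain a' where a': "a' \<in> Theta_in r v \<inter> occ \<omega>"
          "enat_le_real (passage \<omega> S (Theta r ?u) a a') ?C"
        using good[OF u(1)] star_adj_toward_origin[OF False] unfolding good_box_def by blast
      have "Theta r ?u \<subseteq> U"
        using u(1) unfolding U_def by blast
      with a(2) a'(2) have "enat_le_real (passage \<omega> S U x a') (real N * ?C + ?C)"
        by (rule enat_le_real_passage_trans)
      moreover have "real N * ?C + ?C = real (Suc N) * ?C"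
        by (simp add: distrib_right)
      ultimately show ?thesis
        using a'(1) by auto
    qed
  qed
qed

lemma good_boxes_reach_Theta_out:
  fixes V :: "'d::finite pt set" and r :: real
  defines "U \<equiv> \<Union>u \<in> V. Theta r u"
  assumes S: "srw_paths S" and x: "x \<in> Theta_in r 0 \<inter> occ \<omega>"
    and good: "\<And>v. v \<in> V \<Longrightarrow> good_box \<omega> S r v"
    and closed: "\<And>v. v \<in> V \<Longrightarrow> toward_origin v \<in> V"
    and v: "v \<in> V" "\<forall>i. \<bar>v $ i\<bar> \<le> int N"
  shows "\<exists>b \<in> Theta_out r v \<inter> occ \<omega>.
    enat_le_real (passage \<omega> S U x b) ((real N + 1) * r powr (-(1 + 3 * frog_eps TYPE('d))))"
proof -
  let ?C = "r powr (-(1 + 3 * frog_eps TYPE('d)))"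
  obtain a where a: "a \<in> Theta_in r v \<inter> occ \<omega>"
      "enat_le_real (passage \<omega> S U x a) (real N * ?C)"
    using good_boxes_reach_Theta_in[OF S x good closed v] unfolding U_def by blast
  then obtain b where b: "b \<in> Theta_out r v \<inter> occ \<omega>"
      "enat_le_real (passage \<omega> S (Theta r v) a b) ?C"
    using good[OF v(1)] unfolding good_box_def by blast
  have "Theta r v \<subseteq> U"
    using v(1) unfolding U_def by blast
  with a(2) b(2) have "enat_le_real (passage \<omega> S U x b) (real N * ?C + ?C)"
    by (rule enat_le_real_passage_trans)
  moreover have "real N * ?C + ?C = (real N + 1) * ?C"
    by (simp add: distrib_right)
  ultimately show ?thesis
    using b(1) by auto
qed

lemma frog_eps_le: "2 \<le> CARD('d::finite) \<Longrightarrow> frog_eps TYPE('d) \<le> 1 / 24"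
  unfolding frog_eps_def by (simp add: field_simps)

lemma frog_exponent_bounds:
  fixes d \<epsilon> :: real
  assumes "2 \<le> d" and "\<epsilon> \<le> 1 / 24"
  shows "-(d - 1) / 4 + 2 * \<epsilon> \<le> 0" and "-(d + 1) / 2 \<le> -(d - 1) / 4 + 2 * \<epsilon> - (1 + 3 * \<epsilon>)"
  using assms by (simp_all add: field_simps)

lemma V_r_radius_ge_1:
  assumes "2 \<le> CARD('d::finite)" and "0 < r" and "r \<le> 1"
  shows "1 \<le> r powr (-(real CARD('d) - 1) / 4 + 2 * frog_eps TYPE('d))"
proof -
  have "2 \<le> real CARD('d)"
    using assms(1) by simp
  from this frog_eps_le[OF assms(1)] have "-(real CARD('d) - 1) / 4 + 2 * frog_eps TYPE('d) \<le> 0"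
    by (rule frog_exponent_bounds)
  with assms(2,3) show ?thesis
    using powr_mono'[of _ 0 r] by fastforce
qed

lemma card_V_r_ge:
  assumes "2 \<le> CARD('d::finite)" and "0 < r" and "r \<le> 1"
  shows "r powr (-(real CARD('d) * ((real CARD('d) - 1) / 4 - 2 * frog_eps TYPE('d))))
    \<le> real (card (V_r r :: 'd pt set))"
proof -
  let ?d = "real CARD('d)" and ?\<epsilon> = "frog_eps TYPE('d)"
  define R where "R = r powr (-(?d - 1) / 4 + 2 * ?\<epsilon>)"
  have R: "1 \<le> R"
    unfolding R_def using assms by (rule V_r_radius_ge_1)
  have "r powr (-(?d * ((?d - 1) / 4 - 2 * ?\<epsilon>))) = r powr ((-(?d - 1) / 4 + 2 * ?\<epsilon>) * ?d)"
    by (rule arg_cong[where f = "(powr) r"]) (simp add: field_simps)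
  also have "\<dots> = R powr ?d"
    unfolding R_def by (rule powr_powr[symmetric])
  also have "\<dots> = R ^ CARD('d)"
    using R by (simp add: powr_realpow)
  also have "\<dots> \<le> real (card (V_r r :: 'd pt set))"
    unfolding V_r_def R_def[symmetric] using R by (simp add: card_boxZ_origin_ge)
  finally show ?thesis .
qed

lemma V_r_crossing_budget:
  assumes "2 \<le> CARD('d::finite)" and "0 < r" and "r \<le> 1"
  obtains N where "\<And>v i. v \<in> (V_r r :: 'd pt set) \<Longrightarrow> \<bar>v $ i\<bar> \<le> int N"
    and "(real N + 1) * r powr (-(1 + 3 * frog_eps TYPE('d)))
      \<le> 2 * r powr (-(real CARD('d) + 1) / 2)"
proof
  let ?d = "real CARD('d)" and ?\<epsilon> = "frog_eps TYPE('d)"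
  define R where "R = r powr (-(?d - 1) / 4 + 2 * ?\<epsilon>)"
  have R: "1 \<le> R"
    unfolding R_def using assms by (rule V_r_radius_ge_1)
  show "\<bar>v $ i\<bar> \<le> int (nat \<lfloor>R\<rfloor>)" if "v \<in> (V_r r :: 'd pt set)" for v i
  proof -
    have "v $ i \<in> {-\<lfloor>R\<rfloor>..\<lfloor>R\<rfloor>}"
      using that unfolding V_r_def R_def[symmetric] boxZ_origin by blast
    with R show ?thesis
      by auto
  qed
  have "2 \<le> ?d"
    using assms(1) by simp
  note exponents = frog_exponent_bounds[OF this frog_eps_le[OF assms(1)]]
  have "real (nat \<lfloor>R\<rfloor>) + 1 \<le> 2 * R"
    using R by linarith
  then have "(real (nat \<lfloor>R\<rfloor>) + 1) * r powr (-(1 + 3 * ?\<epsilon>)) \<le> 2 * R * r powr (-(1 + 3 * ?\<epsilon>))"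
    by (rule mult_right_mono) simp
  also have "\<dots> = 2 * r powr (-(?d - 1) / 4 + 2 * ?\<epsilon> - (1 + 3 * ?\<epsilon>))"
    unfolding R_def by (simp add: powr_add[symmetric])
  also have "\<dots> \<le> 2 * r powr (-(?d + 1) / 2)"
    using assms(2,3) exponents(2) by (simp add: powr_mono')
  finally show "(real (nat \<lfloor>R\<rfloor>) + 1) * r powr (-(1 + 3 * ?\<epsilon>)) \<le> 2 * r powr (-(?d + 1) / 2)" .
qed

lemma disjoint_family_Theta_out:
  assumes "0 < r"
  shows "disjoint_family_on (Theta_out r :: 'd::finite pt \<Rightarrow> _) V"
proof -
  let ?s = "scale_r TYPE('d) r"
  have "0 < ?s"
    unfolding scale_r_def using assms by simp
  moreover from this have "2 * (3 * ?s) < c_r TYPE('d) r"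
    unfolding c_r_def by linarith
  ultimately show ?thesis
    unfolding disjoint_family_on_def Theta_out_def
    using boxZ_disjoint[of "3 * ?s" "c_r TYPE('d) r"] by fastforce
qed

lemma finite_W_r: "finite (W_r \<omega> S r x)"
proof (rule finite_subset)
  show "W_r \<omega> S r x \<subseteq> (\<Union>v \<in> V_r r. Theta_out r v)"
    unfolding W_r_def by blast
  show "finite (\<Union>v \<in> V_r r. Theta_out r v)"
    unfolding V_r_def Theta_out_def by (intro finite_UN_I finite_Diff finite_boxZ)
qed

lemma W_r_meets_Theta_out:
  assumes "2 \<le> CARD('d::finite)" and "0 < r" and "r \<le> 1"
    and "srw_paths S" and "A_r1 \<omega> S r" and "x \<in> Theta_in r 0 \<inter> occ \<omega>"
    and v: "v \<in> (V_r r :: 'd pt set)"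
  shows "W_r \<omega> S r x \<inter> Theta_out r v \<noteq> {}"
proof -
  obtain N where N: "\<And>v i. v \<in> (V_r r :: 'd pt set) \<Longrightarrow> \<bar>v $ i\<bar> \<le> int N"
    and budget: "(real N + 1) * r powr (-(1 + 3 * frog_eps TYPE('d)))
      \<le> 2 * r powr (-(real CARD('d) + 1) / 2)"
    using V_r_crossing_budget[OF assms(1-3)] by blast
  have good: "good_box \<omega> S r u" if "u \<in> V_r r" for u :: "'d pt"
    using assms(5) that unfolding A_r1_def by blast
  have closed: "toward_origin u \<in> V_r r" if "u \<in> V_r r" for u :: "'d pt"
    using that unfolding V_r_def by (rule toward_origin_in_boxZ_origin)
  obtain b where "b \<in> Theta_out r v \<inter> occ \<omega>"
      "enat_le_real (passage \<omega> S (\<Union>u \<in> V_r r. Theta r u) x b)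
        ((real N + 1) * r powr (-(1 + 3 * frog_eps TYPE('d))))"
    using good_boxes_reach_Theta_out[OF assms(4,6) good closed v] N[OF v] by blast
  with v budget show ?thesis
    unfolding W_r_def by (blast intro: enat_le_real_weaken)
qed

theorem lemma3p7:
  fixes \<omega> :: "'d::finite pt \<Rightarrow> bool" and S :: "'d pt \<Rightarrow> nat \<Rightarrow> 'd pt" and r :: real
  assumes "CARD('d) \<ge> 2"
    and "0 < r" and "r \<le> 1"
    and "(\<Union>v \<in> (V_r r :: 'd pt set). Theta_out r v) \<subseteq> Lambda_r r"
    and "srw_paths S"
    and "A_r1 \<omega> S r"
    and "x \<in> Theta_in r 0 \<inter> occ \<omega>"
  shows "real (card (W_r \<omega> S r x)) \<ge>
           r powr (-(real CARD('d) * ((real CARD('d) - 1) / 4 - 2 * frog_eps TYPE('d))))"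
proof -
  have "card (V_r r :: 'd pt set) \<le> card (W_r \<omega> S r x)"
    using finite_W_r W_r_meets_Theta_out[OF assms(1-3,5-7)] disjoint_family_Theta_out[OF assms(2)]
    by (rule card_le_card_if_hits_disjoint)
  with card_V_r_ge[OF assms(1-3)] show ?thesis
    by linarith
qed

end
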